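(* Let $\tau>0$, $a>4$, let $s,d$ be integers with $1\le s\le d$, and let $\mathcal P$ be any subset of $\mathcal P_{a,\tau}$. Suppose that for some number $\phi(s,d)>0$ and constants $c_1,c_2,c_1',c_2'>0$, $$\inf_{\hat T}\sup_{P_\xi\in\mathcal P}\sup_{\sigma>0}\sup_{\theta\in\Theta_s}\mathbf P_{\theta,P_\xi,\sigma}\Big(\Big|\frac{\hat T}{\sigma^2}-1\Big|\ge\frac{c_1}{\sqrt d}\Big)\ge c_1'$$ and $$\inf_{\hat T}\sup_{P_\xi\in\mathcal P}\sup_{\sigma>0}\sup_{\theta\in\Theta_s}\mathbf P_{\theta,P_\xi,\sigma}\Big(\Big|\frac{\hat T-\|\theta\|_2}{\sigma}\Big|\ge c_2\phi(s,d)\Big)\ge c_2'.$$ Then there exist constants $c_3,c_3'>0$ (depending only on $a,\tau,c_1,c_2,c_1',c_2'$) such that $$\inf_{\hat T}\sup_{P_\xi\in\mathcal P}\sup_{\sigma>0}\sup_{\theta\in\Theta_s}\mathbf P_{\theta,P_\xi,\sigma}\Big(\Big|\frac{\hat T}{\sigma^2}-1\Big|\ge c_3\max\Big(\frac1{\sqrt d},\frac{\phi^2(s,d)}d\Big)\Big)\ge c_3'.$$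
   Context: Model: $Y_i=\theta_i+\sigma\xi_i$, $i=1,\dots,d$, $\theta\in\mathbb R^d$, $\sigma>0$, $\xi_i$ i.i.d. with distribution $P_\xi$; $\mathbf P_{\theta,P_\xi,\sigma}$ is the law of $Y$; $\Theta_s=\{\theta:\|\theta\|_0\le s\}$. For $\tau>0,a\ge2$, $\mathcal P_{a,\tau}$: distributions with $\mathbf E\xi_1=0,\mathbf E\xi_1^2=1$, $\mathbf P(|\xi_1|>t)\le(\tau/t)^a$ for all $t\ge2$. $\inf_{\hat T}$ is the infimum over all estimators (measurable functions of $Y$). *)

theory Defs
  imports "HOL-Probability.Probability"
begin

definition noise_class :: "real \<Rightarrow> real \<Rightarrow> real measure set" where
  "noise_class a \<tau> = {P. prob_space P \<and> sets P = sets borel \<and>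
      integrable P (\<lambda>x. x) \<and> (\<integral>x. x \<partial>P) = 0 \<and>
      integrable P (\<lambda>x. x ^ 2) \<and> (\<integral>x. x ^ 2 \<partial>P) = 1 \<and>
      (\<forall>t\<ge>2. measure P {x. \<bar>x\<bar> > t} \<le> (\<tau> / t) powr a)}"

text \<open>Vectors in R^d are functions nat => real, coordinates 0..d-1, zero outside.
  Theta_s = s-sparse vectors.\<close>
definition sparse_vecs :: "nat \<Rightarrow> nat \<Rightarrow> (nat \<Rightarrow> real) set" where
  "sparse_vecs s d = {\<theta>. (\<forall>i\<ge>d. \<theta> i = 0) \<and> card {i. i < d \<and> \<theta> i \<noteq> 0} \<le> s}"

definition l2norm :: "nat \<Rightarrow> (nat \<Rightarrow> real) \<Rightarrow> real" where
  "l2norm d \<theta> = sqrt (\<Sum>i<d. (\<theta> i)\<^sup>2)"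

definition sample_space :: "nat \<Rightarrow> (nat \<Rightarrow> real) measure" where
  "sample_space d = PiM {..<d} (\<lambda>_. borel)"

text \<open>Law of Y = theta + sigma xi, xi_i iid ~ P.\<close>
definition obs_law :: "nat \<Rightarrow> (nat \<Rightarrow> real) \<Rightarrow> real measure \<Rightarrow> real \<Rightarrow> (nat \<Rightarrow> real) measure" where
  "obs_law d \<theta> P \<sigma> = PiM {..<d} (\<lambda>i. distr P borel (\<lambda>x. \<theta> i + \<sigma> * x))"

definition minimax_prob ::
  "nat \<Rightarrow> nat \<Rightarrow> real measure set \<Rightarrow> (real \<Rightarrow> real \<Rightarrow> (nat \<Rightarrow> real) \<Rightarrow> bool) \<Rightarrow> ereal" where
  "minimax_prob s d \<P> E =
     (INF T \<in> borel_measurable (sample_space d).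
        SUP P \<in> \<P>. SUP \<sigma> \<in> {0<..}. SUP \<theta> \<in> sparse_vecs s d.
          ereal (measure (obs_law d \<theta> P \<sigma>) {y \<in> space (sample_space d). E (T y) \<sigma> \<theta>}))"

end

theory Submission
  imports Defs
begin

text \<open>
  Any estimator \<open>S\<close> of \<open>\<sigma>\<^sup>2\<close> yields the plug-in norm estimator
  \<open>sqrt (max 0 (\<parallel>Y\<parallel>\<^sup>2 - d S))\<close>.  Since \<open>a > 4\<close>, the noise has a bounded fourth moment, so
  \<open>\<parallel>Y\<parallel>\<^sup>2 - \<parallel>\<theta>\<parallel>\<^sup>2 - d \<sigma>\<^sup>2\<close> has second moment \<open>O(\<sigma>\<^sup>2 \<parallel>\<theta>\<parallel>\<^sup>2 + \<sigma>\<^sup>4 d)\<close> and, by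
  Chebyshev, is \<open>O(\<sigma> \<parallel>\<theta>\<parallel> + \<sigma>\<^sup>2 sqrt d)\<close> with probability close to one.  If \<open>S\<close> had relative
  error below \<open>c\<^sub>3 \<phi>\<^sup>2 / d\<close> with probability close to one, the plug-in estimator would be
  within \<open>O(\<sigma> (1 + sqrt (sqrt d + c\<^sub>3 \<phi>\<^sup>2)))\<close> of \<open>\<parallel>\<theta>\<parallel>\<close>, which is below
  \<open>c\<^sub>2 \<sigma> \<phi>\<close> once \<open>c\<^sub>3\<close> is small and \<open>\<phi>\<^sup>2\<close> is a large multiple of \<open>sqrt d\<close>,
  contradicting the lower bound for norm estimation.  Otherwise \<open>\<phi>\<^sup>2 / d = O(1 / sqrt d)\<close>
  and the lower bound for variance estimation at rate \<open>1 / sqrt d\<close> already suffices.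
\<close>

lemma fourth_power_le_dyadic_sum:
  fixes x :: real
  shows "ennreal (x^4) \<le> 16 + (\<Sum>k. ennreal (16^(k+2)) * indicator {x. 2^(k+1) < \<bar>x\<bar>} x)"
proof (cases "\<bar>x\<bar> \<le> 2")
  case True
  have "x^4 = \<bar>x\<bar>^4" by (simp add: power_even_abs)
  also have "\<dots> \<le> 2^4" using True by (intro power_mono) auto
  finally have "ennreal (x^4) \<le> 16" by (simp add: ennreal_le_iff[symmetric])
  then show ?thesis by (meson add_increasing2 order.trans zero_le)
next
  case False
  obtain n :: nat where "\<bar>x\<bar> \<le> 2^n" using real_arch_pow[of 2 "\<bar>x\<bar>"] by (auto intro: less_imp_le)
  define m where "m = (LEAST n. \<bar>x\<bar> \<le> (2::real)^n)"
  have upper: "\<bar>x\<bar> \<le> 2^m" unfolding m_def by (rule LeastI) fact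
  have lower: "\<not> \<bar>x\<bar> \<le> 2^(m-1)" if "m > 0"
  proof
    assume "\<bar>x\<bar> \<le> 2^(m-1)"
    then have "m \<le> m - 1" unfolding m_def by (rule Least_le)
    with that show False by simp
  qed
  have "m \<ge> 2"
  proof (rule ccontr)
    assume "\<not> m \<ge> 2"
    then have "m = 0 \<or> m = 1" by auto
    then show False using upper False by auto
  qed
  then obtain k where mk: "m = k + 2" by (metis add.commute le_add_diff_inverse)
  have "2^(k+1) < \<bar>x\<bar>" using lower mk by auto
  then have ind: "indicator {x. 2^(k+1) < \<bar>x\<bar>} x = (1::ennreal)" by simp
  have "x^4 = \<bar>x\<bar>^4" by (simp add: power_even_abs)
  also have "\<dots> \<le> (2^(k+2))^4" using upper mk by (intro power_mono) auto
  also have "\<dots> = (2^4)^(k+2)" by (metis power_mult mult.commute)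
  also have "\<dots> = 16^(k+2)" by simp
  finally have "ennreal (x^4) \<le> ennreal (16^(k+2)) * indicator {x. 2^(k+1) < \<bar>x\<bar>} x"
    unfolding ind by (simp add: ennreal_leI)
  also have "\<dots> \<le> (\<Sum>k. ennreal (16^(k+2)) * indicator {x. 2^(k+1) < \<bar>x\<bar>} x)"
    (is "_ \<le> suminf ?f")
  proof -
    define f where "f = ?f"
    have "f k \<le> suminf f" using sum_le_suminf[OF summableI, of "{k}" f] by simp
    then show ?thesis unfolding f_def .
  qed
  finally show ?thesis by (meson add_increasing order.trans zero_le)
qed

definition fourth_moment_bound :: "real \<Rightarrow> real \<Rightarrow> real" where
  "fourth_moment_bound a \<tau> = 16 + 16 * \<tau> powr a / (1 - 2 powr (4 - a))"

lemma fourth_moment_bound_pos: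
  assumes "a > 4"
  shows "fourth_moment_bound a \<tau> > 0"
proof -
  have "2 powr (4 - a) < 2 powr 0" using assms by (intro powr_less_mono) auto
  then show ?thesis unfolding fourth_moment_bound_def by (simp add: add_pos_nonneg)
qed

lemma dyadic_tail_term_le:
  fixes P :: "real measure"
  assumes tail: "\<And>t. t \<ge> 2 \<Longrightarrow> measure P {x. \<bar>x\<bar> > t} \<le> (\<tau> / t) powr a" and "\<tau> > 0"
  shows "16^(k+2) * measure P {x. 2^(k+1) < \<bar>x\<bar>} \<le> 16 * \<tau> powr a * (2 powr (4 - a))^(k+1)"
proof -
  have "(2::real)^(k+1) = 2 powr real (k+1)" by (subst powr_realpow) auto
  then have "((2::real)^(k+1)) powr a = 2 powr (real (k+1) * a)" by (simp add: powr_powr)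
  also have "\<dots> = (2 powr a) powr real (k+1)" by (simp add: powr_powr mult.commute)
  also have "\<dots> = (2 powr a)^(k+1)" by (rule powr_realpow) simp
  finally have "((2::real)^(k+1)) powr a = (2 powr a)^(k+1)" .
  then have "(\<tau> / 2^(k+1)) powr a = \<tau> powr a / (2 powr a)^(k+1)"
    using \<open>\<tau> > 0\<close> by (simp add: powr_divide)
  then have "measure P {x. 2^(k+1) < \<bar>x\<bar>} \<le> \<tau> powr a / (2 powr a)^(k+1)"
    using tail[of "2^(k+1)"] by (simp add: self_le_power)
  then have "16^(k+2) * measure P {x. 2^(k+1) < \<bar>x\<bar>} \<le> 16 * \<tau> powr a * (16 / 2 powr a)^(k+1)"
    by (simp add: mult_left_mono power_divide field_simps)
  also have "16 / 2 powr a = 2 powr (4 - a)" by (simp add: powr_diff)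
  finally show ?thesis .
qed

text \<open>The fourth moment is finite because the tail is summed over dyadic shells
  \<open>2^(k+1) < \<bar>x\<bar> \<le> 2^(k+2)\<close>, giving a geometric series of ratio \<open>2 powr (4 - a) < 1\<close>.\<close>
lemma fourth_moment_le_of_tail_bound:
  fixes P :: "real measure"
  assumes "prob_space P" and sets_P: "sets P = sets borel"
    and tail: "\<And>t. t \<ge> 2 \<Longrightarrow> measure P {x. \<bar>x\<bar> > t} \<le> (\<tau> / t) powr a"
    and "a > 4" and "\<tau> > 0"
  shows "integrable P (\<lambda>x. x^4)" and "(\<integral>x. x^4 \<partial>P) \<le> fourth_moment_bound a \<tau>"
proof -
  interpret prob_space P by fact
  have [measurable_cong]: "sets P = sets borel" by (rule sets_P)
  define q :: real where "q = 2 powr (4 - a)"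
  have q: "0 < q" "q < 1"
    using \<open>a > 4\<close> powr_less_mono[of "4 - a" 0 2] unfolding q_def by auto
  define u where "u k = 16 * \<tau> powr a * q^(k+1)" for k :: nat
  have "(\<lambda>k. (16 * \<tau> powr a * q) * q^k) sums ((16 * \<tau> powr a * q) * (1 / (1 - q)))"
    using geometric_sums[of q] q by (intro sums_mult) simp
  then have u_sums: "u sums (16 * \<tau> powr a * q / (1 - q))"
    unfolding u_def by (simp add: field_simps)
  have shell: "ennreal (16^(k+2)) * emeasure P {x. 2^(k+1) < \<bar>x\<bar>} \<le> ennreal (u k)" for k
    using dyadic_tail_term_le[OF tail \<open>\<tau> > 0\<close>, of k]
    by (simp add: u_def q_def emeasure_eq_measure ennreal_mult[symmetric] ennreal_leI)
  have "(\<integral>\<^sup>+x. ennreal (x^4) \<partial>P)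
      \<le> (\<integral>\<^sup>+x. 16 + (\<Sum>k. ennreal (16^(k+2)) * indicator {x. 2^(k+1) < \<bar>x\<bar>} x) \<partial>P)"
    by (intro nn_integral_mono fourth_power_le_dyadic_sum)
  also have "\<dots> = 16 + (\<Sum>k. ennreal (16^(k+2)) * emeasure P {x. 2^(k+1) < \<bar>x\<bar>})"
    by (subst nn_integral_add)
       (auto simp: nn_integral_suminf nn_integral_cmult_indicator emeasure_space_1 sets_P)
  also have "\<dots> \<le> 16 + (\<Sum>k. ennreal (u k))"
    by (intro add_mono suminf_le shell) auto
  also have "(\<Sum>k. ennreal (u k)) = ennreal (16 * \<tau> powr a * q / (1 - q))"
    using q by (intro suminf_ennreal_eq[OF _ u_sums]) (simp add: u_def)
  finally have nn: "(\<integral>\<^sup>+x. ennreal (x^4) \<partial>P) \<le> ennreal (16 + 16 * \<tau> powr a * q / (1 - q))"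
    using q by (simp add: ennreal_plus[symmetric])
  show "integrable P (\<lambda>x. x^4)"
    by (rule integrableI_nonneg) (use nn in \<open>auto simp: top.not_eq_extremum intro: le_less_trans\<close>)
  have "(\<integral>x. x^4 \<partial>P) = enn2real (\<integral>\<^sup>+x. ennreal (x^4) \<partial>P)"
    by (rule integral_eq_nn_integral) auto
  also have "\<dots> \<le> 16 + 16 * \<tau> powr a * q / (1 - q)"
    using nn q by (intro enn2real_leI) auto
  also have "\<dots> \<le> 16 + 16 * \<tau> powr a / (1 - q)"
    using q by (simp add: divide_right_mono mult_left_le)
  finally show "(\<integral>x. x^4 \<partial>P) \<le> fourth_moment_bound a \<tau>"
    unfolding q_def fourth_moment_bound_def .
qed

lemma affine_square_deviation_sq_le:
  fixes t \<sigma> x :: real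
  shows "((t + \<sigma> * x)\<^sup>2 - t\<^sup>2 - \<sigma>\<^sup>2)\<^sup>2 \<le> 8 * \<sigma>\<^sup>2 * t\<^sup>2 * x\<^sup>2 + 2 * \<sigma>^4 * (x^4 + 1)"
proof -
  define p where "p = 2 * \<sigma> * t * x"
  define q where "q = \<sigma>\<^sup>2 * (x\<^sup>2 - 1)"
  have "(t + \<sigma> * x)\<^sup>2 - t\<^sup>2 - \<sigma>\<^sup>2 = p + q"
    unfolding p_def q_def by (simp add: power2_eq_square algebra_simps)
  moreover have "(p + q)\<^sup>2 \<le> 2 * p\<^sup>2 + 2 * q\<^sup>2"
    using zero_le_power2[of "p - q"] by (simp add: power2_eq_square algebra_simps)
  moreover have "p\<^sup>2 = 4 * \<sigma>\<^sup>2 * t\<^sup>2 * x\<^sup>2"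
    unfolding p_def by (simp add: power_mult_distrib)
  moreover have "q\<^sup>2 \<le> \<sigma>^4 * (x^4 + 1)"
  proof -
    have "(x\<^sup>2 - 1)\<^sup>2 \<le> x^4 + 1"
      by (simp add: power2_eq_square power4_eq_xxxx algebra_simps)
    then have "\<sigma>^4 * (x\<^sup>2 - 1)\<^sup>2 \<le> \<sigma>^4 * (x^4 + 1)" by (rule mult_left_mono) simp
    moreover have "q\<^sup>2 = \<sigma>^4 * (x\<^sup>2 - 1)\<^sup>2"
      unfolding q_def by (simp add: power_mult_distrib flip: power_mult)
    ultimately show ?thesis by simp
  qed
  ultimately show ?thesis by simp
qed

lemma affine_square_deviation_moments:
  fixes P :: "real measure" and t \<sigma> m :: real
  assumes "prob_space P" and sets_P: "sets P = sets borel"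
    and "integrable P (\<lambda>x. x)" and "(\<integral>x. x \<partial>P) = 0"
    and "integrable P (\<lambda>x. x\<^sup>2)" and "(\<integral>x. x\<^sup>2 \<partial>P) = 1"
    and "integrable P (\<lambda>x. x^4)" and "(\<integral>x. x^4 \<partial>P) \<le> m"
  defines "N \<equiv> distr P borel (\<lambda>x. t + \<sigma> * x)"
  shows "integrable N (\<lambda>u. u\<^sup>2 - t\<^sup>2 - \<sigma>\<^sup>2)"
    and "(\<integral>u. u\<^sup>2 - t\<^sup>2 - \<sigma>\<^sup>2 \<partial>N) = 0"
    and "integrable N (\<lambda>u. (u\<^sup>2 - t\<^sup>2 - \<sigma>\<^sup>2)\<^sup>2)"
    and "(\<integral>u. (u\<^sup>2 - t\<^sup>2 - \<sigma>\<^sup>2)\<^sup>2 \<partial>N) \<le> 8 * \<sigma>\<^sup>2 * t\<^sup>2 + 2 * \<sigma>^4 * (m + 1)"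
proof -
  interpret prob_space P by fact
  have [measurable_cong]: "sets P = sets borel" by (rule sets_P)
  have shift: "(\<lambda>x. t + \<sigma> * x) \<in> measurable P borel" by measurable
  have dev: "(\<lambda>x. (t + \<sigma> * x)\<^sup>2 - t\<^sup>2 - \<sigma>\<^sup>2) = (\<lambda>x. (2 * \<sigma> * t) * x + \<sigma>\<^sup>2 * (x\<^sup>2 - 1))"
    by (simp add: fun_eq_iff power2_eq_square algebra_simps)
  have int_dev: "integrable P (\<lambda>x. (t + \<sigma> * x)\<^sup>2 - t\<^sup>2 - \<sigma>\<^sup>2)"
    unfolding dev using assms(3,5) by auto
  show "integrable N (\<lambda>u. u\<^sup>2 - t\<^sup>2 - \<sigma>\<^sup>2)"
    unfolding N_def by (subst integrable_distr_eq[OF shift]) (auto intro: int_dev)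
  have "(\<integral>u. u\<^sup>2 - t\<^sup>2 - \<sigma>\<^sup>2 \<partial>N) = (\<integral>x. (2 * \<sigma> * t) * x + \<sigma>\<^sup>2 * (x\<^sup>2 - 1) \<partial>P)"
    unfolding N_def by (subst integral_distr[OF shift]) (auto simp: dev)
  also have "\<dots> = (2 * \<sigma> * t) * (\<integral>x. x \<partial>P) + \<sigma>\<^sup>2 * ((\<integral>x. x\<^sup>2 \<partial>P) - 1)"
    using assms(3,5) by (simp add: prob_space)
  finally show "(\<integral>u. u\<^sup>2 - t\<^sup>2 - \<sigma>\<^sup>2 \<partial>N) = 0" using assms(4,6) by simp
  define B where "B x = 8 * \<sigma>\<^sup>2 * t\<^sup>2 * x\<^sup>2 + 2 * \<sigma>^4 * (x^4 + 1)" for x :: real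
  have int_B: "integrable P B" unfolding B_def using assms(5,7) by auto
  have int_dev2: "integrable P (\<lambda>x. ((t + \<sigma> * x)\<^sup>2 - t\<^sup>2 - \<sigma>\<^sup>2)\<^sup>2)"
    by (rule Bochner_Integration.integrable_bound[OF int_B])
       (auto simp: B_def intro!: AE_I2 order.trans[OF _ abs_ge_self]
             affine_square_deviation_sq_le)
  show "integrable N (\<lambda>u. (u\<^sup>2 - t\<^sup>2 - \<sigma>\<^sup>2)\<^sup>2)"
    unfolding N_def by (subst integrable_distr_eq[OF shift]) (auto intro: int_dev2)
  have "(\<integral>u. (u\<^sup>2 - t\<^sup>2 - \<sigma>\<^sup>2)\<^sup>2 \<partial>N) = (\<integral>x. ((t + \<sigma> * x)\<^sup>2 - t\<^sup>2 - \<sigma>\<^sup>2)\<^sup>2 \<partial>P)"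
    unfolding N_def by (subst integral_distr[OF shift]) auto
  also have "\<dots> \<le> (\<integral>x. B x \<partial>P)"
    using int_dev2 int_B by (rule integral_mono) (simp add: B_def affine_square_deviation_sq_le)
  also have "\<dots> = 8 * \<sigma>\<^sup>2 * t\<^sup>2 * (\<integral>x. x\<^sup>2 \<partial>P) + 2 * \<sigma>^4 * ((\<integral>x. x^4 \<partial>P) + 1)"
    unfolding B_def using assms(5,7) by (simp add: prob_space)
  also have "\<dots> \<le> 8 * \<sigma>\<^sup>2 * t\<^sup>2 + 2 * \<sigma>^4 * (m + 1)"
    using assms(6,8) by (simp add: mult_left_mono)
  finally show "(\<integral>u. (u\<^sup>2 - t\<^sup>2 - \<sigma>\<^sup>2)\<^sup>2 \<partial>N) \<le> 8 * \<sigma>\<^sup>2 * t\<^sup>2 + 2 * \<sigma>^4 * (m + 1)" .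
qed

text \<open>Expanding the square gives a double sum of products \<open>G i (y i) * G j (y j)\<close>; each is a
  product over all coordinates, so it integrates to a product of integrals, which vanishes
  for \<open>i \<noteq> j\<close>.\<close>
lemma (in product_prob_space) integral_square_sum_centered:
  fixes G :: "'i \<Rightarrow> 'a \<Rightarrow> real"
  assumes "finite I"
    and int: "\<And>i. i \<in> I \<Longrightarrow> integrable (M i) (G i)"
    and int_sq: "\<And>i. i \<in> I \<Longrightarrow> integrable (M i) (\<lambda>u. (G i u)\<^sup>2)"
    and centered: "\<And>i. i \<in> I \<Longrightarrow> integral\<^sup>L (M i) (G i) = 0"
  shows "integrable (Pi\<^sub>M I M) (\<lambda>y. (\<Sum>i\<in>I. G i (y i))\<^sup>2)"
    and "(\<integral>y. (\<Sum>i\<in>I. G i (y i))\<^sup>2 \<partial>Pi\<^sub>M I M) = (\<Sum>i\<in>I. \<integral>u. (G i u)\<^sup>2 \<partial>M i)"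
proof -
  define F where "F i j k u = (if k = i then G i u else 1) * (if k = j then G j u else 1)"
    for i j k u
  have int_F: "integrable (M k) (F i j k)" if "i \<in> I" "j \<in> I" for i j k
    unfolding F_def using that int[of i] int[of j] int_sq[of i]
    by (cases "k = i"; cases "k = j") (auto simp: power2_eq_square)
  have integral_F: "integral\<^sup>L (M k) (F i j k) =
      (if k = i \<and> k = j then \<integral>u. (G i u)\<^sup>2 \<partial>M i else if k = i \<or> k = j then 0 else 1)"
    if "i \<in> I" "j \<in> I" for i j k
    unfolding F_def using that centered[of i] centered[of j]
    by (cases "k = i"; cases "k = j") (auto simp: power2_eq_square M.prob_space)
  have expand: "(\<Sum>i\<in>I. G i (y i))\<^sup>2 = (\<Sum>i\<in>I. \<Sum>j\<in>I. \<Prod>k\<in>I. F i j k (y k))" for y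
  proof -
    have "(\<Sum>i\<in>I. G i (y i))\<^sup>2 = (\<Sum>i\<in>I. \<Sum>j\<in>I. G i (y i) * G j (y j))"
      by (simp add: power2_eq_square sum_product)
    also have "\<dots> = (\<Sum>i\<in>I. \<Sum>j\<in>I. \<Prod>k\<in>I. F i j k (y k))"
      using \<open>finite I\<close> by (intro sum.cong refl) (simp add: F_def prod.distrib)
    finally show ?thesis .
  qed
  have int_prod: "integrable (Pi\<^sub>M I M) (\<lambda>y. \<Prod>k\<in>I. F i j k (y k))" if "i \<in> I" "j \<in> I" for i j
    using \<open>finite I\<close> int_F[OF that] by (rule product_integrable_prod)
  have integral_prod: "(\<integral>y. (\<Prod>k\<in>I. F i j k (y k)) \<partial>Pi\<^sub>M I M)
      = (if i = j then \<integral>u. (G i u)\<^sup>2 \<partial>M i else 0)" if "i \<in> I" "j \<in> I" for i j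
  proof -
    have "(\<integral>y. (\<Prod>k\<in>I. F i j k (y k)) \<partial>Pi\<^sub>M I M) = (\<Prod>k\<in>I. integral\<^sup>L (M k) (F i j k))"
      using \<open>finite I\<close> int_F[OF that] by (rule product_integral_prod)
    also have "\<dots> = (if i = j then \<integral>u. (G i u)\<^sup>2 \<partial>M i else 0)"
      using \<open>finite I\<close> that by (auto simp: integral_F[OF that] if_distrib prod.If_cases)
    finally show ?thesis .
  qed
  show "integrable (Pi\<^sub>M I M) (\<lambda>y. (\<Sum>i\<in>I. G i (y i))\<^sup>2)"
    unfolding expand by (intro Bochner_Integration.integrable_sum int_prod)
  show "(\<integral>y. (\<Sum>i\<in>I. G i (y i))\<^sup>2 \<partial>Pi\<^sub>M I M) = (\<Sum>i\<in>I. \<integral>u. (G i u)\<^sup>2 \<partial>M i)"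
    unfolding expand using \<open>finite I\<close>
    by (simp add: Bochner_Integration.integral_sum int_prod integral_prod sum.delta cong: sum.cong)
qed

lemma noise_classD:
  assumes "P \<in> noise_class a \<tau>"
  shows "prob_space P" and "sets P = sets borel"
    and "integrable P (\<lambda>x. x)" and "(\<integral>x. x \<partial>P) = 0"
    and "integrable P (\<lambda>x. x\<^sup>2)" and "(\<integral>x. x\<^sup>2 \<partial>P) = 1"
    and "\<And>t. t \<ge> 2 \<Longrightarrow> measure P {x. \<bar>x\<bar> > t} \<le> (\<tau> / t) powr a"
  using assms unfolding noise_class_def by auto

lemma sets_obs_law: "sets (obs_law d \<theta> P \<sigma>) = sets (sample_space d)"
  unfolding obs_law_def sample_space_def by (rule sets_PiM_cong) auto

lemma space_obs_law: "space (obs_law d \<theta> P \<sigma>) = space (sample_space d)"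
  using sets_obs_law by (rule sets_eq_imp_space_eq)

lemma prob_space_obs_law:
  assumes "prob_space P" and sets_P: "sets P = sets borel"
  shows "prob_space (obs_law d \<theta> P \<sigma>)"
proof -
  have [measurable_cong]: "sets P = sets borel" by (rule sets_P)
  show ?thesis
    unfolding obs_law_def using assms(1) by (auto intro!: prob_space_PiM prob_space.prob_space_distr)
qed

lemma l2norm_nonneg: "0 \<le> l2norm d \<theta>"
  unfolding l2norm_def by (simp add: sum_nonneg)

lemma l2norm_sq: "(l2norm d \<theta>)\<^sup>2 = (\<Sum>i<d. (\<theta> i)\<^sup>2)"
  unfolding l2norm_def by (simp add: sum_nonneg)

definition sum_sq_deviation :: "nat \<Rightarrow> (nat \<Rightarrow> real) \<Rightarrow> real \<Rightarrow> (nat \<Rightarrow> real) \<Rightarrow> real" where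
  "sum_sq_deviation d \<theta> \<sigma> y = (\<Sum>i<d. (y i)\<^sup>2 - (\<theta> i)\<^sup>2 - \<sigma>\<^sup>2)"

lemma sum_sq_deviation_second_moment:
  assumes noise: "P \<in> noise_class a \<tau>" and "a > 4" and "\<tau> > 0"
  shows "integrable (obs_law d \<theta> P \<sigma>) (\<lambda>y. (sum_sq_deviation d \<theta> \<sigma> y)\<^sup>2)"
    and "(\<integral>y. (sum_sq_deviation d \<theta> \<sigma> y)\<^sup>2 \<partial>obs_law d \<theta> P \<sigma>)
           \<le> 8 * \<sigma>\<^sup>2 * (l2norm d \<theta>)\<^sup>2 + 2 * \<sigma>^4 * (fourth_moment_bound a \<tau> + 1) * d"
proof -
  note noise_props = noise_classD[OF noise]
  have [measurable_cong]: "sets P = sets borel" by (rule noise_props(2))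
  note fourth = fourth_moment_le_of_tail_bound[OF noise_props(1,2,7) \<open>a > 4\<close> \<open>\<tau> > 0\<close>]
  define M where "M i = distr P borel (\<lambda>x. \<theta> i + \<sigma> * x)" for i
  interpret product_prob_space M "{..<d}"
    unfolding M_def using noise_props(1)
    by (auto intro!: product_prob_spaceI prob_space.prob_space_distr)
  note moments = affine_square_deviation_moments[OF noise_props(1-6) fourth, of "\<theta> i" \<sigma> for i, folded M_def]
  have law: "obs_law d \<theta> P \<sigma> = Pi\<^sub>M {..<d} M" unfolding obs_law_def M_def ..
  note square_sum = integral_square_sum_centered[where G = "\<lambda>i u. u\<^sup>2 - (\<theta> i)\<^sup>2 - \<sigma>\<^sup>2"]
  show "integrable (obs_law d \<theta> P \<sigma>) (\<lambda>y. (sum_sq_deviation d \<theta> \<sigma> y)\<^sup>2)"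
    unfolding law sum_sq_deviation_def using moments by (intro square_sum) auto
  have "(\<integral>y. (sum_sq_deviation d \<theta> \<sigma> y)\<^sup>2 \<partial>obs_law d \<theta> P \<sigma>)
      = (\<Sum>i<d. \<integral>u. (u\<^sup>2 - (\<theta> i)\<^sup>2 - \<sigma>\<^sup>2)\<^sup>2 \<partial>M i)"
    unfolding law sum_sq_deviation_def using moments by (intro square_sum) auto
  also have "\<dots> \<le> (\<Sum>i<d. 8 * \<sigma>\<^sup>2 * (\<theta> i)\<^sup>2 + 2 * \<sigma>^4 * (fourth_moment_bound a \<tau> + 1))"
    by (intro sum_mono moments(4))
  also have "\<dots> = 8 * \<sigma>\<^sup>2 * (l2norm d \<theta>)\<^sup>2 + 2 * \<sigma>^4 * (fourth_moment_bound a \<tau> + 1) * d"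
    by (simp add: l2norm_sq sum.distrib sum_distrib_left)
  finally show "(\<integral>y. (sum_sq_deviation d \<theta> \<sigma> y)\<^sup>2 \<partial>obs_law d \<theta> P \<sigma>)
      \<le> 8 * \<sigma>\<^sup>2 * (l2norm d \<theta>)\<^sup>2 + 2 * \<sigma>^4 * (fourth_moment_bound a \<tau> + 1) * d" .
qed

lemma sum_sq_deviation_tail:
  assumes noise: "P \<in> noise_class a \<tau>" and "a > 4" and "\<tau> > 0"
    and "\<sigma> > 0" and "K > 0" and "d \<ge> 1"
  shows "measure (obs_law d \<theta> P \<sigma>) {y \<in> space (sample_space d).
            K * (\<sigma> * l2norm d \<theta> + \<sigma>\<^sup>2 * sqrt d) \<le> \<bar>sum_sq_deviation d \<theta> \<sigma> y\<bar>}
           \<le> (2 * fourth_moment_bound a \<tau> + 10) / K\<^sup>2"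
proof -
  let ?Q = "obs_law d \<theta> P \<sigma>"
  interpret prob_space ?Q using noise_classD(1,2)[OF noise] by (rule prob_space_obs_law)
  define n where "n = l2norm d \<theta>"
  define r where "r = K * (\<sigma> * n + \<sigma>\<^sup>2 * sqrt d)"
  define C where "C = 2 * fourth_moment_bound a \<tau> + 10"
  have "n \<ge> 0" unfolding n_def by (rule l2norm_nonneg)
  have "r > 0"
    unfolding r_def using \<open>K > 0\<close> \<open>\<sigma> > 0\<close> \<open>n \<ge> 0\<close> \<open>d \<ge> 1\<close> by (simp add: add_nonneg_pos)
  have "0 < fourth_moment_bound a \<tau>" using \<open>a > 4\<close> by (rule fourth_moment_bound_pos)
  have meas: "sum_sq_deviation d \<theta> \<sigma> \<in> borel_measurable ?Q"
    unfolding measurable_cong_sets[OF sets_obs_law refl] sum_sq_deviation_def sample_space_def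
    by measurable
  have "(r / K)\<^sup>2 = (\<sigma> * n + \<sigma>\<^sup>2 * sqrt d)\<^sup>2" unfolding r_def using \<open>K > 0\<close> by simp
  also have "\<dots> = \<sigma>\<^sup>2 * n\<^sup>2 + \<sigma>^4 * d + 2 * (\<sigma> * n) * (\<sigma>\<^sup>2 * sqrt d)"
    by (simp add: power2_eq_square power4_eq_xxxx algebra_simps)
  finally have r_sq: "\<sigma>\<^sup>2 * n\<^sup>2 + \<sigma>^4 * d \<le> (r / K)\<^sup>2" using \<open>\<sigma> > 0\<close> \<open>n \<ge> 0\<close> by simp
  have "8 * \<sigma>\<^sup>2 * n\<^sup>2 \<le> C * (\<sigma>\<^sup>2 * n\<^sup>2)"
    using mult_right_mono[of 8 C "\<sigma>\<^sup>2 * n\<^sup>2"] \<open>0 < fourth_moment_bound a \<tau>\<close>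
    by (simp add: C_def mult.assoc)
  moreover have "2 * (fourth_moment_bound a \<tau> + 1) * (\<sigma>^4 * d) \<le> C * (\<sigma>^4 * d)"
    by (rule mult_right_mono) (use \<open>0 < fourth_moment_bound a \<tau>\<close> in \<open>simp_all add: C_def\<close>)
  then have "2 * \<sigma>^4 * (fourth_moment_bound a \<tau> + 1) * d \<le> C * (\<sigma>^4 * d)"
    by (simp add: algebra_simps)
  moreover have "(\<integral>y. (sum_sq_deviation d \<theta> \<sigma> y)\<^sup>2 \<partial>?Q)
      \<le> 8 * \<sigma>\<^sup>2 * n\<^sup>2 + 2 * \<sigma>^4 * (fourth_moment_bound a \<tau> + 1) * d"
    unfolding n_def by (rule sum_sq_deviation_second_moment(2)[OF assms(1-3)])
  ultimately have "(\<integral>y. (sum_sq_deviation d \<theta> \<sigma> y)\<^sup>2 \<partial>?Q) \<le> C * (\<sigma>\<^sup>2 * n\<^sup>2) + C * (\<sigma>^4 * d)"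
    by linarith
  also have "\<dots> \<le> C * (r / K)\<^sup>2"
    using r_sq \<open>0 < fourth_moment_bound a \<tau>\<close> by (simp add: C_def flip: distrib_left)
  finally have "(\<integral>y. (sum_sq_deviation d \<theta> \<sigma> y)\<^sup>2 \<partial>?Q) \<le> C * (r / K)\<^sup>2" .
  then have "(\<integral>y. (sum_sq_deviation d \<theta> \<sigma> y)\<^sup>2 \<partial>?Q) / r\<^sup>2 \<le> C / K\<^sup>2"
    using \<open>r > 0\<close> \<open>K > 0\<close> by (simp add: field_simps power_divide)
  moreover have "measure ?Q {y \<in> space ?Q. r \<le> \<bar>sum_sq_deviation d \<theta> \<sigma> y\<bar>}
      \<le> (\<integral>y. (sum_sq_deviation d \<theta> \<sigma> y)\<^sup>2 \<partial>?Q) / r\<^sup>2"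
    using meas sum_sq_deviation_second_moment(1)[OF assms(1-3)] \<open>r > 0\<close>
    by (rule second_moment_method)
  ultimately show ?thesis unfolding space_obs_law r_def n_def C_def by simp
qed

lemma abs_sqrt_perturbation_le:
  fixes n k B \<Delta> :: real
  assumes "n \<ge> 0" and "k \<ge> 0" and "B \<ge> 0" and \<Delta>: "\<bar>\<Delta>\<bar> \<le> k * n + B"
  shows "\<bar>sqrt (max 0 (n\<^sup>2 + \<Delta>)) - n\<bar> \<le> k + 2 * sqrt B"
proof -
  define r where "r = sqrt (max 0 (n\<^sup>2 + \<Delta>))"
  have "r \<ge> 0" unfolding r_def by simp
  have "\<bar>r\<^sup>2 - n\<^sup>2\<bar> \<le> \<bar>\<Delta>\<bar>" unfolding r_def by (auto simp: max_def)
  moreover have "r\<^sup>2 - n\<^sup>2 = (r - n) * (r + n)" by (simp add: power2_eq_square algebra_simps)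
  then have "\<bar>r\<^sup>2 - n\<^sup>2\<bar> = \<bar>r - n\<bar> * (r + n)" using \<open>r \<ge> 0\<close> \<open>n \<ge> 0\<close> by (simp add: abs_mult)
  ultimately have prod_le: "\<bar>r - n\<bar> * (r + n) \<le> k * n + B" using \<Delta> by linarith
  show ?thesis
  proof (cases "sqrt B \<le> n \<and> n > 0")
    case True
    text \<open>For large \<open>n\<close> divide by \<open>r + n \<ge> n\<close>.\<close>
    have "\<bar>r - n\<bar> * n \<le> \<bar>r - n\<bar> * (r + n)" using \<open>r \<ge> 0\<close> by (intro mult_left_mono) auto
    then have "\<bar>r - n\<bar> * n \<le> k * n + B" using prod_le by linarith
    then have "\<bar>r - n\<bar> \<le> k + B / n" using True by (simp add: field_simps)
    moreover have "B \<le> sqrt B * n"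
      using True \<open>B \<ge> 0\<close> mult_left_mono[of "sqrt B" n "sqrt B"] by simp
    then have "B / n \<le> sqrt B" using True by (simp add: field_simps)
    ultimately show ?thesis unfolding r_def using real_sqrt_ge_zero[OF \<open>B \<ge> 0\<close>] by linarith
  next
    case False
    text \<open>For small \<open>n\<close> use \<open>r + n \<ge> \<bar>r - n\<bar>\<close>.\<close>
    then have "n \<le> sqrt B" using \<open>n \<ge> 0\<close> \<open>B \<ge> 0\<close> by auto
    have "\<bar>r - n\<bar> \<le> r + n" using \<open>r \<ge> 0\<close> \<open>n \<ge> 0\<close> by linarith
    then have "\<bar>r - n\<bar>\<^sup>2 \<le> \<bar>r - n\<bar> * (r + n)"
      unfolding power2_eq_square by (rule mult_left_mono) simp
    also have "\<dots> \<le> k * sqrt B + B"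
      using prod_le mult_left_mono[OF \<open>n \<le> sqrt B\<close> \<open>k \<ge> 0\<close>] by linarith
    also have "\<dots> \<le> (k + 2 * sqrt B)\<^sup>2"
    proof -
      have "(k + 2 * sqrt B)\<^sup>2 = k * k + 4 * (k * sqrt B) + 4 * (sqrt B)\<^sup>2"
        by (simp add: power2_eq_square algebra_simps)
      moreover have "0 \<le> k * sqrt B" "0 \<le> k * k" using \<open>k \<ge> 0\<close> \<open>B \<ge> 0\<close> by auto
      ultimately show ?thesis using \<open>B \<ge> 0\<close> by simp
    qed
    finally have "\<bar>r - n\<bar>\<^sup>2 \<le> (k + 2 * sqrt B)\<^sup>2" .
    then show ?thesis
      unfolding r_def by (rule power2_le_imp_le) (use \<open>k \<ge> 0\<close> \<open>B \<ge> 0\<close> in auto)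
  qed
qed

definition norm_estimate :: "nat \<Rightarrow> ((nat \<Rightarrow> real) \<Rightarrow> real) \<Rightarrow> (nat \<Rightarrow> real) \<Rightarrow> real" where
  "norm_estimate d S y = sqrt (max 0 ((\<Sum>i<d. (y i)\<^sup>2) - real d * S y))"

lemma norm_estimate_error_le:
  fixes S :: "(nat \<Rightarrow> real) \<Rightarrow> real"
  assumes "\<sigma> > 0" and "K \<ge> 0" and "c \<ge> 0" and "d \<ge> 1"
    and dev: "\<bar>sum_sq_deviation d \<theta> \<sigma> y\<bar> \<le> K * (\<sigma> * l2norm d \<theta> + \<sigma>\<^sup>2 * sqrt d)"
    and var: "\<bar>S y / \<sigma>\<^sup>2 - 1\<bar> \<le> c / d"
  shows "\<bar>(norm_estimate d S y - l2norm d \<theta>) / \<sigma>\<bar> \<le> K + 2 * sqrt (K * sqrt d + c)"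
proof -
  define n where "n = l2norm d \<theta>"
  have "n \<ge> 0" unfolding n_def by (rule l2norm_nonneg)
  define \<Delta> where "\<Delta> = (\<Sum>i<d. (y i)\<^sup>2) - real d * S y - n\<^sup>2"
  have "(\<Sum>i<d. (y i)\<^sup>2) = sum_sq_deviation d \<theta> \<sigma> y + n\<^sup>2 + d * \<sigma>\<^sup>2"
    unfolding sum_sq_deviation_def n_def l2norm_sq by (simp add: sum_subtractf)
  then have \<Delta>_eq: "\<Delta> = sum_sq_deviation d \<theta> \<sigma> y - d * \<sigma>\<^sup>2 * (S y / \<sigma>\<^sup>2 - 1)"
    unfolding \<Delta>_def using \<open>\<sigma> > 0\<close> by (simp add: field_simps)
  have "\<bar>d * \<sigma>\<^sup>2 * (S y / \<sigma>\<^sup>2 - 1)\<bar> = d * \<sigma>\<^sup>2 * \<bar>S y / \<sigma>\<^sup>2 - 1\<bar>" by (simp add: abs_mult)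
  also have "\<dots> \<le> d * \<sigma>\<^sup>2 * (c / d)" using var by (intro mult_left_mono) auto
  also have "\<dots> = \<sigma>\<^sup>2 * c" using \<open>d \<ge> 1\<close> by simp
  finally have "\<bar>\<Delta>\<bar> \<le> (K * \<sigma>) * n + (K * \<sigma>\<^sup>2 * sqrt d + \<sigma>\<^sup>2 * c)"
    using dev abs_triangle_ineq4[of "sum_sq_deviation d \<theta> \<sigma> y" "d * \<sigma>\<^sup>2 * (S y / \<sigma>\<^sup>2 - 1)"]
    unfolding \<Delta>_eq n_def by (simp add: algebra_simps)
  then have "\<bar>sqrt (max 0 (n\<^sup>2 + \<Delta>)) - n\<bar> \<le> K * \<sigma> + 2 * sqrt (K * \<sigma>\<^sup>2 * sqrt d + \<sigma>\<^sup>2 * c)"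
    using \<open>n \<ge> 0\<close> \<open>K \<ge> 0\<close> \<open>\<sigma> > 0\<close> \<open>c \<ge> 0\<close> by (intro abs_sqrt_perturbation_le) auto
  also have "K * \<sigma>\<^sup>2 * sqrt d + \<sigma>\<^sup>2 * c = \<sigma>\<^sup>2 * (K * sqrt d + c)" by (simp add: algebra_simps)
  also have "sqrt (\<sigma>\<^sup>2 * (K * sqrt d + c)) = \<sigma> * sqrt (K * sqrt d + c)"
    using \<open>\<sigma> > 0\<close> by (simp add: real_sqrt_mult)
  finally have "\<bar>sqrt (max 0 (n\<^sup>2 + \<Delta>)) - n\<bar> \<le> \<sigma> * (K + 2 * sqrt (K * sqrt d + c))"
    by (simp add: algebra_simps)
  moreover have "norm_estimate d S y = sqrt (max 0 (n\<^sup>2 + \<Delta>))"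
    unfolding norm_estimate_def \<Delta>_def by simp
  ultimately have "\<bar>norm_estimate d S y - n\<bar> \<le> \<sigma> * (K + 2 * sqrt (K * sqrt d + c))" by simp
  then show ?thesis
    using \<open>\<sigma> > 0\<close> unfolding n_def by (simp add: abs_divide pos_divide_le_eq mult.commute)
qed

lemma norm_estimate_error_prob:
  fixes S :: "(nat \<Rightarrow> real) \<Rightarrow> real"
  assumes noise: "P \<in> noise_class a \<tau>" and "a > 4" and "\<tau> > 0"
    and "\<sigma> > 0" and "K > 0" and "c \<ge> 0" and "d \<ge> 1"
    and S: "S \<in> borel_measurable (sample_space d)"
    and budget: "K + 2 * sqrt (K * sqrt d + c) < \<epsilon>"
  shows "measure (obs_law d \<theta> P \<sigma>)
      {y \<in> space (sample_space d). \<epsilon> \<le> \<bar>(norm_estimate d S y - l2norm d \<theta>) / \<sigma>\<bar>}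
    \<le> (2 * fourth_moment_bound a \<tau> + 10) / K\<^sup>2 + measure (obs_law d \<theta> P \<sigma>)
      {y \<in> space (sample_space d). c / d \<le> \<bar>S y / \<sigma>\<^sup>2 - 1\<bar>}"
proof -
  let ?Q = "obs_law d \<theta> P \<sigma>"
  interpret prob_space ?Q using noise_classD(1,2)[OF noise] by (rule prob_space_obs_law)
  define A where "A = {y \<in> space (sample_space d).
    K * (\<sigma> * l2norm d \<theta> + \<sigma>\<^sup>2 * sqrt d) \<le> \<bar>sum_sq_deviation d \<theta> \<sigma> y\<bar>}"
  define B where "B = {y \<in> space (sample_space d). c / d \<le> \<bar>S y / \<sigma>\<^sup>2 - 1\<bar>}"
  have "sum_sq_deviation d \<theta> \<sigma> \<in> borel_measurable (sample_space d)"
    unfolding sum_sq_deviation_def sample_space_def by measurable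
  then have sets_AB: "A \<in> sets ?Q" "B \<in> sets ?Q"
    unfolding A_def B_def sets_obs_law using S by measurable
  have "{y \<in> space (sample_space d). \<epsilon> \<le> \<bar>(norm_estimate d S y - l2norm d \<theta>) / \<sigma>\<bar>} \<subseteq> A \<union> B"
  proof
    fix y assume y: "y \<in> {y \<in> space (sample_space d). \<epsilon> \<le> \<bar>(norm_estimate d S y - l2norm d \<theta>) / \<sigma>\<bar>}"
    show "y \<in> A \<union> B"
    proof (rule ccontr)
      assume "y \<notin> A \<union> B"
      then have "\<bar>(norm_estimate d S y - l2norm d \<theta>) / \<sigma>\<bar> \<le> K + 2 * sqrt (K * sqrt d + c)"
        using y assms(4-7) unfolding A_def B_def by (intro norm_estimate_error_le) auto
      then show False using y budget by auto
    qed
  qed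
  then have "measure ?Q {y \<in> space (sample_space d). \<epsilon> \<le> \<bar>(norm_estimate d S y - l2norm d \<theta>) / \<sigma>\<bar>}
      \<le> measure ?Q (A \<union> B)"
    using sets_AB by (intro finite_measure_mono) auto
  also have "\<dots> \<le> measure ?Q A + measure ?Q B"
    using sets_AB by (intro measure_subadditive) (auto simp: emeasure_eq_measure)
  also have "measure ?Q A \<le> (2 * fourth_moment_bound a \<tau> + 10) / K\<^sup>2"
    unfolding A_def using assms(1-5,7) by (rule sum_sq_deviation_tail)
  finally show ?thesis unfolding B_def by simp
qed

lemma minimax_prob_variance_antimono:
  assumes "\<P> \<subseteq> noise_class a \<tau>" and "b' \<le> b"
  shows "minimax_prob s d \<P> (\<lambda>t \<sigma> \<theta>. b \<le> \<bar>t / \<sigma>\<^sup>2 - 1\<bar>)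
    \<le> minimax_prob s d \<P> (\<lambda>t \<sigma> \<theta>. b' \<le> \<bar>t / \<sigma>\<^sup>2 - 1\<bar>)"
  unfolding minimax_prob_def
proof (intro INF_superset_mono[OF subset_refl] SUP_subset_mono[OF subset_refl] iffD2[OF ereal_less_eq(3)])
  fix T :: "(nat \<Rightarrow> real) \<Rightarrow> real" and P and \<sigma> :: real and \<theta> :: "nat \<Rightarrow> real"
  assume T: "T \<in> borel_measurable (sample_space d)" and "P \<in> \<P>"
  interpret prob_space "obs_law d \<theta> P \<sigma>"
    using assms(1) \<open>P \<in> \<P>\<close> noise_classD(1,2) by (blast intro: prob_space_obs_law)
  have "{y \<in> space (sample_space d). b' \<le> \<bar>T y / \<sigma>\<^sup>2 - 1\<bar>} \<in> sets (obs_law d \<theta> P \<sigma>)"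
    unfolding sets_obs_law using T by measurable
  then show "measure (obs_law d \<theta> P \<sigma>) {y \<in> space (sample_space d). b \<le> \<bar>T y / \<sigma>\<^sup>2 - 1\<bar>}
      \<le> measure (obs_law d \<theta> P \<sigma>) {y \<in> space (sample_space d). b' \<le> \<bar>T y / \<sigma>\<^sup>2 - 1\<bar>}"
    using \<open>b' \<le> b\<close> by (intro finite_measure_mono) auto
qed

lemma times_sqrt_divide_self:
  fixes x c :: real
  assumes "x > 0"
  shows "c * sqrt x / x = c / sqrt x"
proof -
  have "c * sqrt x / x = c * sqrt x / (sqrt x * sqrt x)" using assms by simp
  also have "\<dots> = c / sqrt x" using assms by (intro mult_divide_mult_cancel_right) simp
  finally show ?thesis .
qed

lemma minimax_variance_small_phi:
  assumes "\<P> \<subseteq> noise_class a \<tau>" and "1 \<le> M" and "1 \<le> d" and "\<phi>\<^sup>2 \<le> M * sqrt d"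
    and "0 < c\<^sub>3" and "c\<^sub>3 \<le> c / M"
  shows "minimax_prob s d \<P> (\<lambda>t \<sigma> \<theta>. c / sqrt d \<le> \<bar>t / \<sigma>\<^sup>2 - 1\<bar>)
    \<le> minimax_prob s d \<P> (\<lambda>t \<sigma> \<theta>. c\<^sub>3 * max (1 / sqrt d) (\<phi>\<^sup>2 / d) \<le> \<bar>t / \<sigma>\<^sup>2 - 1\<bar>)"
proof (rule minimax_prob_variance_antimono[OF assms(1)])
  have "\<phi>\<^sup>2 / d \<le> M * sqrt d / d" using assms(3,4) by (simp add: divide_right_mono)
  also have "\<dots> = M / sqrt d" using assms(3) by (simp add: times_sqrt_divide_self)
  finally have "max (1 / sqrt d) (\<phi>\<^sup>2 / d) \<le> M / sqrt d"
    using assms(2) by (simp add: divide_right_mono)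
  then have "c\<^sub>3 * max (1 / sqrt d) (\<phi>\<^sup>2 / d) \<le> (c / M) * (M / sqrt d)"
    using assms(5,6) by (intro mult_mono) (auto simp: le_max_iff_disj)
  also have "\<dots> = c / sqrt d" using assms(2) by simp
  finally show "c\<^sub>3 * max (1 / sqrt d) (\<phi>\<^sup>2 / d) \<le> c / sqrt d" .
qed

lemma max_rate_eq_of_large_phi:
  assumes "1 \<le> M" and "1 \<le> d" and "M * sqrt d < \<phi>\<^sup>2"
  shows "max (1 / sqrt d) (\<phi>\<^sup>2 / d) = \<phi>\<^sup>2 / d"
proof -
  have "1 / sqrt d \<le> M / sqrt d" using assms(1,2) by (simp add: divide_right_mono)
  also have "\<dots> = M * sqrt d / d" using assms(2) by (simp add: times_sqrt_divide_self)
  also have "\<dots> \<le> \<phi>\<^sup>2 / d" using assms(2,3) by (simp add: divide_right_mono)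
  finally show ?thesis by simp
qed

lemma norm_error_budget_lt:
  fixes K M c\<^sub>2 c\<^sub>3 \<phi> d :: real
  assumes "K > 0" and "c\<^sub>2 > 0" and "\<phi> > 0" and "d \<ge> 1"
    and M: "M \<ge> 1" "M \<ge> (4 * K / c\<^sub>2)\<^sup>2" "M \<ge> 64 * K / c\<^sub>2\<^sup>2"
    and "c\<^sub>3 \<le> c\<^sub>2\<^sup>2 / 64" and "c\<^sub>3 > 0"
    and large: "M * sqrt d < \<phi>\<^sup>2"
  shows "K + 2 * sqrt (K * sqrt d + c\<^sub>3 * \<phi>\<^sup>2) < c\<^sub>2 * \<phi>"
proof -
  have "M \<le> M * sqrt d" using M(1) \<open>d \<ge> 1\<close> by simp
  then have "(4 * K / c\<^sub>2)\<^sup>2 < \<phi>\<^sup>2" using large M(2) by linarith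
  then have "4 * K / c\<^sub>2 < \<phi>" by (rule power2_less_imp_less) (use \<open>\<phi> > 0\<close> in auto)
  then have K_lt: "K < c\<^sub>2 * \<phi> / 4" using \<open>c\<^sub>2 > 0\<close> by (simp add: field_simps)
  have "K * sqrt d \<le> K * (\<phi>\<^sup>2 / M)"
    using large M(1) \<open>K > 0\<close> by (intro mult_left_mono) (auto simp: field_simps)
  also have "\<dots> = (K / M) * \<phi>\<^sup>2" by simp
  also have "\<dots> \<le> (c\<^sub>2\<^sup>2 / 64) * \<phi>\<^sup>2"
  proof -
    have "K / M \<le> c\<^sub>2\<^sup>2 / 64" using M(1,3) \<open>c\<^sub>2 > 0\<close> by (simp add: field_simps)
    then show ?thesis by (intro mult_right_mono) auto
  qed
  finally have "K * sqrt d + c\<^sub>3 * \<phi>\<^sup>2 \<le> (c\<^sub>2\<^sup>2 / 32) * \<phi>\<^sup>2"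
    using mult_right_mono[OF \<open>c\<^sub>3 \<le> c\<^sub>2\<^sup>2 / 64\<close>, of "\<phi>\<^sup>2"] by simp
  also have "\<dots> = (1 / 32) * (c\<^sub>2 * \<phi>)\<^sup>2" by (simp add: power_mult_distrib)
  also have "\<dots> \<le> (9 / 256) * (c\<^sub>2 * \<phi>)\<^sup>2" by (intro mult_right_mono) auto
  also have "\<dots> = (3 * c\<^sub>2 * \<phi> / 16)\<^sup>2" by (simp add: power2_eq_square algebra_simps)
  finally have "sqrt (K * sqrt d + c\<^sub>3 * \<phi>\<^sup>2) \<le> sqrt ((3 * c\<^sub>2 * \<phi> / 16)\<^sup>2)"
    by (rule real_sqrt_le_mono)
  also have "\<dots> = 3 * c\<^sub>2 * \<phi> / 16" using \<open>c\<^sub>2 > 0\<close> \<open>\<phi> > 0\<close> by simp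
  finally have "sqrt (K * sqrt d + c\<^sub>3 * \<phi>\<^sup>2) \<le> 3 * c\<^sub>2 * \<phi> / 16" .
  with K_lt mult_pos_pos[OF \<open>c\<^sub>2 > 0\<close> \<open>\<phi> > 0\<close>] show ?thesis by linarith
qed

lemma minimax_norm_le_of_variance:
  assumes sub: "\<P> \<subseteq> noise_class a \<tau>" and "a > 4" and "\<tau> > 0"
    and "K > 0" and "c \<ge> 0" and "1 \<le> d"
    and budget: "K + 2 * sqrt (K * sqrt d + c) < \<epsilon>"
    and var: "minimax_prob s d \<P> (\<lambda>t \<sigma> \<theta>. c / d \<le> \<bar>t / \<sigma>\<^sup>2 - 1\<bar>) < ereal \<delta>"
  shows "minimax_prob s d \<P> (\<lambda>t \<sigma> \<theta>. \<epsilon> \<le> \<bar>(t - l2norm d \<theta>) / \<sigma>\<bar>)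
    \<le> ereal ((2 * fourth_moment_bound a \<tau> + 10) / K\<^sup>2 + \<delta>)"
proof -
  obtain S where S: "S \<in> borel_measurable (sample_space d)"
    and S_var: "(SUP P \<in> \<P>. SUP \<sigma> \<in> {0<..}. SUP \<theta> \<in> sparse_vecs s d.
      ereal (measure (obs_law d \<theta> P \<sigma>) {y \<in> space (sample_space d). c / d \<le> \<bar>S y / \<sigma>\<^sup>2 - 1\<bar>}))
      < ereal \<delta>"
    using var unfolding minimax_prob_def INF_less_iff by blast
  have "measure (obs_law d \<theta> P \<sigma>)
      {y \<in> space (sample_space d). \<epsilon> \<le> \<bar>(norm_estimate d S y - l2norm d \<theta>) / \<sigma>\<bar>}
      \<le> (2 * fourth_moment_bound a \<tau> + 10) / K\<^sup>2 + \<delta>"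
    if "P \<in> \<P>" and "\<sigma> \<in> {0<..}" and "\<theta> \<in> sparse_vecs s d" for P \<sigma> \<theta>
  proof -
    have "ereal (measure (obs_law d \<theta> P \<sigma>)
        {y \<in> space (sample_space d). c / d \<le> \<bar>S y / \<sigma>\<^sup>2 - 1\<bar>}) < ereal \<delta>"
      using that by (intro le_less_trans[OF _ S_var] SUP_upper2[OF that(1)] SUP_upper2[OF that(2)]
          SUP_upper[OF that(3)])
    then show ?thesis
      using norm_estimate_error_prob[OF _ \<open>a > 4\<close> \<open>\<tau> > 0\<close> _ \<open>K > 0\<close> \<open>c \<ge> 0\<close> \<open>1 \<le> d\<close> S budget,
          of P \<sigma> \<theta>] sub that by force
  qed
  moreover have "norm_estimate d S \<in> borel_measurable (sample_space d)"
    using S unfolding norm_estimate_def sample_space_def by measurable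
  ultimately show ?thesis
    unfolding minimax_prob_def by (intro INF_lower2[of "norm_estimate d S"] SUP_least) auto
qed

lemma minimax_variance_large_phi:
  assumes sub: "\<P> \<subseteq> noise_class a \<tau>" and "a > 4" and "\<tau> > 0"
    and "1 \<le> d" and "\<phi> > 0" and "c\<^sub>2 > 0"
    and K: "K > 0" "(2 * fourth_moment_bound a \<tau> + 10) / K\<^sup>2 < c\<^sub>2' / 2"
    and M: "1 \<le> M" "(4 * K / c\<^sub>2)\<^sup>2 \<le> M" "64 * K / c\<^sub>2\<^sup>2 \<le> M"
    and c\<^sub>3: "0 < c\<^sub>3" "c\<^sub>3 \<le> c\<^sub>2\<^sup>2 / 64"
    and large: "M * sqrt d < \<phi>\<^sup>2"
    and norm_bound: "minimax_prob s d \<P> (\<lambda>t \<sigma> \<theta>. c\<^sub>2 * \<phi> \<le> \<bar>(t - l2norm d \<theta>) / \<sigma>\<bar>) \<ge> ereal c\<^sub>2'"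
  shows "minimax_prob s d \<P> (\<lambda>t \<sigma> \<theta>. c\<^sub>3 * max (1 / sqrt d) (\<phi>\<^sup>2 / d) \<le> \<bar>t / \<sigma>\<^sup>2 - 1\<bar>)
    \<ge> ereal (c\<^sub>2' / 2)"
proof (rule ccontr)
  have budget: "K + 2 * sqrt (K * sqrt d + c\<^sub>3 * \<phi>\<^sup>2) < c\<^sub>2 * \<phi>"
    using \<open>1 \<le> d\<close> by (intro norm_error_budget_lt[OF K(1) \<open>c\<^sub>2 > 0\<close> \<open>\<phi> > 0\<close> _ M c\<^sub>3(2,1) large]) simp
  have "max (1 / sqrt d) (\<phi>\<^sup>2 / d) = \<phi>\<^sup>2 / d"
    using \<open>1 \<le> d\<close> by (intro max_rate_eq_of_large_phi[OF M(1) _ large]) simp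
  moreover assume "\<not> ?thesis"
  ultimately have var: "minimax_prob s d \<P> (\<lambda>t \<sigma> \<theta>. c\<^sub>3 * \<phi>\<^sup>2 / d \<le> \<bar>t / \<sigma>\<^sup>2 - 1\<bar>) < ereal (c\<^sub>2' / 2)"
    by (simp add: not_le)
  have "minimax_prob s d \<P> (\<lambda>t \<sigma> \<theta>. c\<^sub>2 * \<phi> \<le> \<bar>(t - l2norm d \<theta>) / \<sigma>\<bar>)
      \<le> ereal ((2 * fourth_moment_bound a \<tau> + 10) / K\<^sup>2 + c\<^sub>2' / 2)"
    by (rule minimax_norm_le_of_variance[OF sub \<open>a > 4\<close> \<open>\<tau> > 0\<close> K(1) _ \<open>1 \<le> d\<close> budget var])
       (use c\<^sub>3(1) in simp)
  with norm_bound have "ereal c\<^sub>2' \<le> ereal ((2 * fourth_moment_bound a \<tau> + 10) / K\<^sup>2 + c\<^sub>2' / 2)"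
    by (rule order.trans)
  then show False using K(2) by simp
qed

theorem lemma8:
  fixes a \<tau> c\<^sub>1 c\<^sub>2 c\<^sub>1' c\<^sub>2' :: real
  assumes "\<tau> > 0" and "a > 4"
    and "c\<^sub>1 > 0" and "c\<^sub>2 > 0" and "c\<^sub>1' > 0" and "c\<^sub>2' > 0"
  shows "\<exists>c\<^sub>3 c\<^sub>3' :: real. c\<^sub>3 > 0 \<and> c\<^sub>3' > 0 \<and>
    (\<forall>(s::nat) (d::nat) (\<P>::real measure set) (\<phi>::real).
       1 \<le> s \<longrightarrow> s \<le> d \<longrightarrow> \<P> \<subseteq> noise_class a \<tau> \<longrightarrow> \<phi> > 0 \<longrightarrow>
       minimax_prob s d \<P> (\<lambda>(t::real) (\<sigma>::real) (\<theta>::nat\<Rightarrow>real). \<bar>t / \<sigma>\<^sup>2 - 1\<bar> \<ge> c\<^sub>1 / sqrt d) \<ge> ereal c\<^sub>1' \<longrightarrow>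
       minimax_prob s d \<P> (\<lambda>(t::real) (\<sigma>::real) (\<theta>::nat\<Rightarrow>real). \<bar>(t - l2norm d \<theta>) / \<sigma>\<bar> \<ge> c\<^sub>2 * \<phi>) \<ge> ereal c\<^sub>2' \<longrightarrow>
       minimax_prob s d \<P>
         (\<lambda>(t::real) (\<sigma>::real) (\<theta>::nat\<Rightarrow>real). \<bar>t / \<sigma>\<^sup>2 - 1\<bar> \<ge> c\<^sub>3 * max (1 / sqrt d) (\<phi>\<^sup>2 / d)) \<ge> ereal c\<^sub>3')"
proof -
  define K where "K = sqrt (4 * (2 * fourth_moment_bound a \<tau> + 10) / c\<^sub>2')"
  define M where "M = max 1 (max ((4 * K / c\<^sub>2)\<^sup>2) (64 * K / c\<^sub>2\<^sup>2))"
  define c\<^sub>3 where "c\<^sub>3 = min (c\<^sub>1 / M) (c\<^sub>2\<^sup>2 / 64)"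
  define c\<^sub>3' where "c\<^sub>3' = min c\<^sub>1' (c\<^sub>2' / 2)"
  have "0 < fourth_moment_bound a \<tau>" using \<open>a > 4\<close> by (rule fourth_moment_bound_pos)
  then have K: "K > 0" "(2 * fourth_moment_bound a \<tau> + 10) / K\<^sup>2 = c\<^sub>2' / 4"
    unfolding K_def using \<open>c\<^sub>2' > 0\<close> by (auto simp: field_simps)
  then have K_lt: "(2 * fourth_moment_bound a \<tau> + 10) / K\<^sup>2 < c\<^sub>2' / 2"
    using K(2) \<open>c\<^sub>2' > 0\<close> by linarith
  have M: "1 \<le> M" "(4 * K / c\<^sub>2)\<^sup>2 \<le> M" "64 * K / c\<^sub>2\<^sup>2 \<le> M" unfolding M_def by auto
  have c\<^sub>3: "0 < c\<^sub>3" "c\<^sub>3 \<le> c\<^sub>1 / M" "c\<^sub>3 \<le> c\<^sub>2\<^sup>2 / 64"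
    unfolding c\<^sub>3_def using \<open>c\<^sub>1 > 0\<close> \<open>c\<^sub>2 > 0\<close> M(1)
    by (simp_all only: min.cobounded1 min.cobounded2) simp
  have c\<^sub>3': "0 < c\<^sub>3'" "c\<^sub>3' \<le> c\<^sub>1'" "c\<^sub>3' \<le> c\<^sub>2' / 2"
    unfolding c\<^sub>3'_def using \<open>c\<^sub>1' > 0\<close> \<open>c\<^sub>2' > 0\<close> by auto
  show ?thesis
  proof (rule exI[of _ c\<^sub>3], rule exI[of _ c\<^sub>3'], intro conjI c\<^sub>3(1) c\<^sub>3'(1) allI impI)
    fix s d :: nat and \<P> :: "real measure set" and \<phi> :: real
    assume "1 \<le> s" "s \<le> d" and sub: "\<P> \<subseteq> noise_class a \<tau>" and "\<phi> > 0"
      and var_bound: "minimax_prob s d \<P> (\<lambda>t \<sigma> \<theta>. \<bar>t / \<sigma>\<^sup>2 - 1\<bar> \<ge> c\<^sub>1 / sqrt d) \<ge> ereal c\<^sub>1'"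
      and norm_bound: "minimax_prob s d \<P> (\<lambda>t \<sigma> \<theta>. \<bar>(t - l2norm d \<theta>) / \<sigma>\<bar> \<ge> c\<^sub>2 * \<phi>) \<ge> ereal c\<^sub>2'"
    have "1 \<le> d" using \<open>1 \<le> s\<close> \<open>s \<le> d\<close> by simp
    show "minimax_prob s d \<P> (\<lambda>t \<sigma> \<theta>. \<bar>t / \<sigma>\<^sup>2 - 1\<bar> \<ge> c\<^sub>3 * max (1 / sqrt d) (\<phi>\<^sup>2 / d)) \<ge> ereal c\<^sub>3'"
    proof (cases "\<phi>\<^sup>2 \<le> M * sqrt d")
      case True
      then show ?thesis
        using minimax_variance_small_phi[OF sub M(1) \<open>1 \<le> d\<close> True c\<^sub>3(1,2)] var_bound c\<^sub>3'(2)
        by (meson ereal_less_eq(3) order.trans)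
    next
      case False
      then show ?thesis
        using minimax_variance_large_phi[OF sub \<open>a > 4\<close> \<open>\<tau> > 0\<close> \<open>1 \<le> d\<close> \<open>\<phi> > 0\<close> \<open>c\<^sub>2 > 0\<close> K(1) K_lt
            M c\<^sub>3(1,3) _ norm_bound] c\<^sub>3'(3)
        by (meson ereal_less_eq(3) not_le order.trans)
    qed
  qed
qed

end
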